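(* Let $S$ be an inverse semigroup. Then $S$ is a weak semilattice if and only if $\mathsf{D}(S)$ is a $\wedge$-semigroup.
   Context: For $X\subseteq S$ let $X^{\downarrow}=\{s\in S : s\le x \text{ for some } x\in X\}$ (natural partial order), and $a^{\downarrow}=\{a\}^{\downarrow}$. Elements $s,t$ are compatible if $s^{-1}t$ and $st^{-1}$ are idempotents. $\mathsf{D}(S)$ is the set of all subsets of $S$ of the form $\{a_1,\dots,a_m\}^{\downarrow}$ where $\{a_1,\dots,a_m\}$ is a finite (possibly empty) set of pairwise compatible elements of $S$; it is an inverse semigroup under subset multiplication, whose natural partial order is inclusion. $S$ is a weak semilattice if for all $a,b\in S$ the set $a^{\downarrow}\cap b^{\downarrow}$ equals $F^{\downarrow}$ for some finite subset $F\subseteq S$. An inverse semigroup is a $\wedge$-semigroup if every pair of elements has a meet with respect to the natural partial order. *)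

theory Defs
  imports Main
begin

definition inverse_semigroup :: "('a::semigroup_mult) itself \<Rightarrow> bool" where
  "inverse_semigroup _ \<longleftrightarrow> (\<forall>a::'a. \<exists>!b. a * b * a = a \<and> b * a * b = b)"

definition sinv :: "'a::semigroup_mult \<Rightarrow> 'a" where
  "sinv a = (THE b. a * b * a = a \<and> b * a * b = b)"

definition idem :: "'a::semigroup_mult \<Rightarrow> bool" where
  "idem e \<longleftrightarrow> e * e = e"

definition nat_le :: "'a::semigroup_mult \<Rightarrow> 'a \<Rightarrow> bool" where
  "nat_le s t \<longleftrightarrow> (\<exists>e. idem e \<and> s = e * t)"

definition down :: "'a::semigroup_mult set \<Rightarrow> 'a set" where
  "down X = {s. \<exists>x\<in>X. nat_le s x}"

definition compatible :: "'a::semigroup_mult \<Rightarrow> 'a \<Rightarrow> bool" where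
  "compatible s t \<longleftrightarrow> idem (sinv s * t) \<and> idem (s * sinv t)"

definition DS :: "'a::semigroup_mult itself \<Rightarrow> 'a set set" where
  "DS _ = {down A | A. finite A \<and> (\<forall>a\<in>A. \<forall>b\<in>A. compatible a b)}"

definition weak_semilattice :: "'a::semigroup_mult itself \<Rightarrow> bool" where
  "weak_semilattice _ \<longleftrightarrow>
     (\<forall>a b::'a. \<exists>F. finite F \<and> down {a} \<inter> down {b} = down F)"

definition set_mult :: "'a::semigroup_mult set \<Rightarrow> 'a set \<Rightarrow> 'a set" where
  "set_mult X Y = {x * y | x y. x \<in> X \<and> y \<in> Y}"

definition nat_le_on :: "'b set \<Rightarrow> ('b \<Rightarrow> 'b \<Rightarrow> 'b) \<Rightarrow> 'b \<Rightarrow> 'b \<Rightarrow> bool" where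
  "nat_le_on C m s t \<longleftrightarrow> (\<exists>e\<in>C. m e e = e \<and> s = m e t)"

definition wedge_semigroup_on :: "'b set \<Rightarrow> ('b \<Rightarrow> 'b \<Rightarrow> 'b) \<Rightarrow> bool" where
  "wedge_semigroup_on C m \<longleftrightarrow>
     (\<forall>x\<in>C. \<forall>y\<in>C. \<exists>z\<in>C. nat_le_on C m z x \<and> nat_le_on C m z y \<and>
        (\<forall>w\<in>C. nat_le_on C m w x \<and> nat_le_on C m w y \<longrightarrow> nat_le_on C m w z))"

end

theory Submission imports Defs begin

text \<open>In an inverse semigroup idempotents commute, so the natural order on \<open>\<D>(S)\<close>
  is inclusion: an idempotent of \<open>\<D>(S)\<close> consists of idempotents, and conversely \<open>X \<subseteq> Y\<close>
  is witnessed by the ideal generated by the ranges \<open>a a\<^sup>-\<^sup>1\<close> of the generators of \<open>X\<close>.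
  Meets in \<open>\<D>(S)\<close> are therefore intersections whenever they exist. If \<open>S\<close> is a weak
  semilattice, \<open>A\<^sup>\<down> \<inter> B\<^sup>\<down>\<close> is the union of the finitely generated ideals
  \<open>a\<^sup>\<down> \<inter> b\<^sup>\<down>\<close>, hence lies in \<open>\<D>(S)\<close>; conversely, since every principal ideal \<open>s\<^sup>\<down>\<close>
  belongs to \<open>\<D>(S)\<close>, the meet of \<open>a\<^sup>\<down>\<close> and \<open>b\<^sup>\<down>\<close> must be \<open>a\<^sup>\<down> \<inter> b\<^sup>\<down>\<close>.\<close>

definition is_subset_meet :: "'b set set \<Rightarrow> 'b set \<Rightarrow> 'b set \<Rightarrow> 'b set \<Rightarrow> bool" where
  "is_subset_meet C X Y Z \<longleftrightarrow> Z \<in> C \<and> Z \<subseteq> X \<and> Z \<subseteq> Y \<and> (\<forall>W\<in>C. W \<subseteq> X \<and> W \<subseteq> Y \<longrightarrow> W \<subseteq> Z)"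

lemma is_subset_meet_Int: "X \<inter> Y \<in> C \<Longrightarrow> is_subset_meet C X Y (X \<inter> Y)"
  unfolding is_subset_meet_def by blast

locale inv_semigroup = assumes inverse_semigroup: "inverse_semigroup TYPE('a::semigroup_mult)"
begin

subsection \<open>Inverses and idempotents\<close>

lemma ex1_inverse: "\<exists>!b. (a::'a) * b * a = a \<and> b * a * b = b"
  using inverse_semigroup unfolding inverse_semigroup_def by blast

lemma mult_sinv_mult: "(a::'a) * sinv a * a = a"
  and sinv_mult_sinv: "sinv a * a * sinv a = sinv a"
  using theI'[OF ex1_inverse[of a]] unfolding sinv_def by auto

lemma sinv_unique: "(a::'a) * b * a = a \<Longrightarrow> b * a * b = b \<Longrightarrow> sinv a = b"
  unfolding sinv_def by (rule the1_equality[OF ex1_inverse]) simp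

lemma mult_sinv_mult_right: "(a::'a) * (sinv a * (a * z)) = a * z"
  by (metis mult.assoc mult_sinv_mult)

lemma sinv_mult_sinv_right: "sinv (a::'a) * (a * (sinv a * z)) = sinv a * z"
  by (metis mult.assoc sinv_mult_sinv)

lemma sinv_idem: "idem (e::'a) \<Longrightarrow> sinv e = e"
  unfolding idem_def by (rule sinv_unique) auto

lemma sinv_sinv: "sinv (sinv (a::'a)) = a"
  by (rule sinv_unique) (simp_all add: mult_sinv_mult sinv_mult_sinv)

text \<open>\<open>b (ab)\<^sup>-\<^sup>1 a\<close> is again an inverse of \<open>ab\<close>, which forces \<open>(ab)\<^sup>-\<^sup>1\<close> to be idempotent
  and hence equal to its own inverse \<open>ab\<close>.\<close>
lemma idem_mult:
  assumes "idem (a::'a)" and "idem b"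
  shows "idem (a * b)"
proof -
  have aaz: "a * (a * z) = a * z" and bbz: "b * (b * z) = b * z" for z
    using assms unfolding idem_def by (metis mult.assoc)+
  define x where "x = sinv (a * b)"
  have "sinv (a * b) = b * x * a"
  proof (rule sinv_unique)
    show "a * b * (b * x * a) * (a * b) = a * b"
      using mult_sinv_mult[of "a * b"] by (simp add: x_def mult.assoc aaz bbz)
    show "b * x * a * (a * b) * (b * x * a) = b * x * a"
      using sinv_mult_sinv_right[of "a * b", simplified mult.assoc] by (simp add: x_def mult.assoc aaz bbz)
  qed
  then have xx: "x * x = x"
    by (metis mult.assoc sinv_mult_sinv x_def)
  have "sinv x = a * b"
    by (rule sinv_unique) (use mult_sinv_mult[of "a * b"] sinv_mult_sinv[of "a * b"] in
        \<open>simp_all add: x_def mult.assoc\<close>)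
  moreover have "sinv x = x"
    by (rule sinv_unique) (simp_all add: xx mult.assoc)
  ultimately show ?thesis using xx by (simp add: idem_def)
qed

text \<open>Both \<open>e f\<close> and \<open>f e\<close> are idempotent, and \<open>f e\<close> is an inverse of \<open>e f\<close>; the
  unique inverse of an idempotent is the idempotent itself.\<close>
lemma idem_commute:
  assumes e: "idem (e::'a)" and f: "idem f"
  shows "e * f = f * e"
proof -
  have ee: "e * e = e" and ff: "f * f = f" using e f by (auto simp: idem_def)
  have eez: "e * (e * z) = e * z" and ffz: "f * (f * z) = f * z" for z
    by (metis ee ff mult.assoc)+
  have ef: "idem (e * f)" and fe: "idem (f * e)"
    using idem_mult e f by auto
  have "sinv (e * f) = f * e"
    by (rule sinv_unique) (use ef fe in \<open>simp_all add: idem_def mult.assoc eez ffz\<close>)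
  then show ?thesis using sinv_idem[OF ef] by simp
qed

lemma idem_mult_sinv: "idem ((a::'a) * sinv a)"
  and idem_sinv_mult: "idem (sinv a * a)"
  unfolding idem_def by (metis mult.assoc mult_sinv_mult) (metis mult.assoc sinv_mult_sinv)

lemma sinv_mult: "sinv ((a::'a) * b) = sinv b * sinv a"
proof (rule sinv_unique)
  have c: "b * sinv b * (sinv a * a) = sinv a * a * (b * sinv b)"
    using idem_commute[OF idem_mult_sinv idem_sinv_mult] .
  have "a * b * (sinv b * sinv a) * (a * b) = a * (b * sinv b * (sinv a * a)) * b"
    by (simp add: mult.assoc)
  also have "\<dots> = (a * sinv a * a) * (b * sinv b * b)"
    unfolding c by (simp add: mult.assoc)
  finally show "a * b * (sinv b * sinv a) * (a * b) = a * b"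
    by (simp add: mult_sinv_mult)
  have "sinv b * sinv a * (a * b) * (sinv b * sinv a) = sinv b * (sinv a * a * (b * sinv b)) * sinv a"
    by (simp add: mult.assoc)
  also have "\<dots> = (sinv b * b * sinv b) * (sinv a * a * sinv a)"
    unfolding c[symmetric] by (simp add: mult.assoc)
  finally show "sinv b * sinv a * (a * b) * (sinv b * sinv a) = sinv b * sinv a"
    by (simp add: sinv_mult_sinv)
qed

lemma idem_mult_eq_mult_conj:
  assumes e: "idem (e::'a)"
  shows "e * t = t * (sinv t * e * t)" and "idem (sinv t * e * t)"
proof -
  have c: "t * sinv t * e = e * (t * sinv t)"
    using idem_commute[OF idem_mult_sinv e] .
  have "t * (sinv t * e * t) = (t * sinv t * e) * t" by (simp add: mult.assoc)
  also have "\<dots> = e * (t * sinv t * t)" unfolding c by (simp add: mult.assoc)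
  finally show "e * t = t * (sinv t * e * t)" by (simp add: mult_sinv_mult)
  have "sinv t * e * t * (sinv t * e * t) = sinv t * (e * (t * sinv t)) * e * t"
    by (simp add: mult.assoc)
  also have "\<dots> = sinv t * (t * sinv t) * (e * e) * t"
    unfolding c[symmetric] by (simp add: mult.assoc)
  also have "\<dots> = sinv t * e * t"
    using e by (simp add: idem_def mult.assoc sinv_mult_sinv_right)
  finally show "idem (sinv t * e * t)" by (simp add: idem_def)
qed

lemma mult_idem_eq_conj_mult:
  assumes g: "idem (g::'a)"
  shows "t * g = (t * g * sinv t) * t" and "idem (t * g * sinv t)"
proof -
  have c: "g * (sinv t * t) = sinv t * t * g"
    using idem_commute[OF g idem_sinv_mult] .
  have "(t * g * sinv t) * t = t * (g * (sinv t * t))" by (simp add: mult.assoc)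
  also have "\<dots> = (t * sinv t * t) * g" unfolding c by (simp add: mult.assoc)
  finally show "t * g = (t * g * sinv t) * t" by (simp add: mult_sinv_mult)
  have "t * g * sinv t * (t * g * sinv t) = t * (g * (sinv t * t)) * g * sinv t"
    by (simp add: mult.assoc)
  also have "\<dots> = t * (sinv t * t) * (g * g) * sinv t"
    unfolding c by (simp add: mult.assoc)
  also have "\<dots> = t * g * sinv t"
    using g by (simp add: idem_def mult.assoc mult_sinv_mult_right)
  finally show "idem (t * g * sinv t)" by (simp add: idem_def)
qed

subsection \<open>The natural partial order\<close>

lemma nat_le_right_iff: "nat_le (s::'a) t \<longleftrightarrow> (\<exists>g. idem g \<and> s = t * g)"
  unfolding nat_le_def using idem_mult_eq_mult_conj mult_idem_eq_conj_mult by metis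

lemma nat_le_refl: "nat_le (s::'a) s"
  unfolding nat_le_def using idem_mult_sinv mult_sinv_mult by metis

lemma nat_le_trans: "nat_le (s::'a) t \<Longrightarrow> nat_le t u \<Longrightarrow> nat_le s u"
  unfolding nat_le_def by (metis idem_mult mult.assoc)

lemma idem_nat_le_idem: "nat_le (s::'a) e \<Longrightarrow> idem e \<Longrightarrow> idem s"
  unfolding nat_le_def using idem_mult by blast

lemma idem_mult_nat_le: "idem (e::'a) \<Longrightarrow> nat_le (e * s) s"
  unfolding nat_le_def by blast

lemma nat_le_mult_sinv:
  assumes "nat_le (s::'a) t"
  shows "nat_le (s * sinv s) (t * sinv t)"
proof -
  obtain e where e: "idem e" "s = e * t" using assms unfolding nat_le_def by blast
  have "s * sinv s = e * (t * sinv t * e)"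
    using e by (simp add: sinv_mult sinv_idem mult.assoc)
  also have "\<dots> = e * (t * sinv t)"
    using e(1) idem_commute[OF idem_mult_sinv e(1)]
    by (metis idem_def mult.assoc)
  finally show ?thesis unfolding nat_le_def using e(1) by blast
qed

lemma compatible_refl: "compatible (a::'a) a"
  unfolding compatible_def using idem_mult_sinv idem_sinv_mult by blast

lemma compatible_idem: "idem (e::'a) \<Longrightarrow> idem f \<Longrightarrow> compatible e f"
  unfolding compatible_def by (simp add: sinv_idem idem_mult)

lemma compatible_antimono:
  assumes "nat_le (s::'a) s'" and "nat_le t t'" and "compatible s' t'"
  shows "compatible s t"
proof -
  obtain e where e: "idem e" "s = e * s'" using assms(1) unfolding nat_le_def by blast
  obtain g where g: "idem g" "t = t' * g" using assms(2) unfolding nat_le_right_iff by blast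
  have c1: "idem (sinv s' * t')" and c2: "idem (s' * sinv t')"
    using assms(3) unfolding compatible_def by auto
  have "sinv s * t = sinv s' * (e * t') * g"
    using e g by (simp add: sinv_mult sinv_idem mult.assoc)
  also have "\<dots> = (sinv s' * t') * (sinv t' * e * t') * g"
    using idem_mult_eq_mult_conj(1)[OF e(1), of t'] by (simp add: mult.assoc)
  finally have left: "idem (sinv s * t)"
    using idem_mult[OF idem_mult[OF c1 idem_mult_eq_mult_conj(2)[OF e(1)]] g(1)] by simp
  have "s * sinv t = e * (s' * g) * sinv t'"
    using e g by (simp add: sinv_mult sinv_idem mult.assoc)
  also have "\<dots> = e * (s' * g * sinv s') * (s' * sinv t')"
    by (subst mult_idem_eq_conj_mult(1)[OF g(1), of s']) (simp add: mult.assoc)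
  finally have "idem (s * sinv t)"
    using idem_mult[OF idem_mult[OF e(1) mult_idem_eq_conj_mult(2)[OF g(1)]] c2] by simp
  with left show ?thesis unfolding compatible_def by blast
qed

text \<open>\<open>c\<^sup>-\<^sup>1 = (c\<^sup>-\<^sup>1 x)(y c\<^sup>-\<^sup>1)\<close> is a product of idempotents.\<close>
lemma idem_if_compatible_product:
  assumes "compatible (c::'a) x" and "compatible y c" and "c = x * y"
  shows "idem c"
proof -
  have "sinv c = sinv c * x * (y * sinv c)"
    using sinv_mult_sinv[of c] assms(3) by (simp add: mult.assoc)
  moreover have "idem (sinv c * x * (y * sinv c))"
    using assms(1,2) unfolding compatible_def by (blast intro: idem_mult)
  ultimately have "idem (sinv c)" by simp
  then show ?thesis using sinv_idem sinv_sinv by metis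
qed

subsection \<open>Order ideals and \<open>\<D>(S)\<close>\<close>

lemma subset_down: "A \<subseteq> down (A::'a set)"
  unfolding down_def using nat_le_refl by blast

lemma down_closed: "nat_le (z::'a) y \<Longrightarrow> y \<in> down A \<Longrightarrow> z \<in> down A"
  unfolding down_def using nat_le_trans by blast

lemma down_singleton_subset_iff: "down {s::'a} \<subseteq> down A \<longleftrightarrow> s \<in> down A"
proof
  show "s \<in> down A \<Longrightarrow> down {s} \<subseteq> down A"
    using down_closed unfolding down_def[of "{s}"] by blast
qed (use subset_down in blast)

lemma DS_iff:
  "X \<in> DS TYPE('a) \<longleftrightarrow> (\<exists>A. X = down A \<and> finite A \<and> (\<forall>a\<in>A. \<forall>b\<in>A. compatible (a::'a) b))"
  unfolding DS_def by blast

lemma down_singleton_in_DS: "down {a::'a} \<in> DS TYPE('a)"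
  unfolding DS_iff using compatible_refl by blast

lemma DS_compatible:
  assumes "X \<in> DS TYPE('a)" and "(x::'a) \<in> X" and "y \<in> X"
  shows "compatible x y"
proof -
  obtain A a b where "\<forall>a\<in>A. \<forall>b\<in>A. compatible a b" "a \<in> A" "b \<in> A" "nat_le x a" "nat_le y b"
    using assms unfolding DS_iff down_def by blast
  then show ?thesis using compatible_antimono by blast
qed

lemma DS_down_closed: "X \<in> DS TYPE('a) \<Longrightarrow> nat_le (z::'a) y \<Longrightarrow> y \<in> X \<Longrightarrow> z \<in> X"
  unfolding DS_iff using down_closed by blast

lemma idem_if_in_idem_DS:
  assumes "E \<in> DS TYPE('a)" and "set_mult E E = E" and "(e::'a) \<in> E"
  shows "idem e"
proof -
  obtain x y where "x \<in> E" "y \<in> E" "e = x * y"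
    using assms(2,3) unfolding set_mult_def by blast
  then show ?thesis
    using idem_if_compatible_product DS_compatible[OF assms(1)] assms(3) by metis
qed

lemma DS_nat_le_imp_subset:
  assumes "Y \<in> DS TYPE('a)" and "nat_le_on (DS TYPE('a)) set_mult X Y"
  shows "X \<subseteq> Y"
proof
  fix x :: 'a assume "x \<in> X"
  obtain E where E: "E \<in> DS TYPE('a)" "set_mult E E = E" "X = set_mult E Y"
    using assms(2) unfolding nat_le_on_def by blast
  then obtain e y where "e \<in> E" "y \<in> Y" "x = e * y"
    using \<open>x \<in> X\<close> unfolding set_mult_def by blast
  moreover have "idem e"
    using idem_if_in_idem_DS[OF E(1,2) \<open>e \<in> E\<close>] .
  ultimately show "x \<in> Y"
    using idem_mult_nat_le DS_down_closed[OF assms(1)] by blast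
qed

text \<open>Compatibility gives \<open>a\<^sup>-\<^sup>1 y = y\<^sup>-\<^sup>1 a\<close>, so \<open>e y = e a (a\<^sup>-\<^sup>1 y) = (e a y\<^sup>-\<^sup>1) a \<le> a\<close>
  whenever \<open>e \<le> a a\<^sup>-\<^sup>1\<close>.\<close>
lemma mult_nat_le_if_compatible:
  assumes "nat_le (e::'a) (a * sinv a)" and "compatible a y"
  shows "nat_le (e * y) a"
proof -
  obtain f where f: "idem f" "e = f * (a * sinv a)" using assms(1) unfolding nat_le_def by blast
  have ie: "idem e" using idem_nat_le_idem[OF assms(1) idem_mult_sinv] .
  have c1: "idem (sinv a * y)" and c2: "idem (a * sinv y)"
    using assms(2) unfolding compatible_def by auto
  have ay: "sinv a * y = sinv y * a"
    using sinv_idem[OF c1] by (simp add: sinv_mult sinv_sinv)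
  have "e * y = e * (a * sinv a) * y"
    using f idem_mult_sinv[of a] by (simp add: idem_def mult.assoc)
  also have "\<dots> = (e * (a * sinv y)) * a"
    by (simp add: mult.assoc ay[symmetric])
  finally show ?thesis unfolding nat_le_def using idem_mult[OF ie c2] by blast
qed

lemma DS_subset_imp_nat_le:
  assumes X: "X \<in> DS TYPE('a)" and Y: "Y \<in> DS TYPE('a)" and "X \<subseteq> Y"
  shows "nat_le_on (DS TYPE('a)) set_mult X Y"
proof -
  obtain A where A: "X = down A" "finite A" "\<forall>a\<in>A. \<forall>b\<in>A. compatible (a::'a) b"
    using X unfolding DS_iff by blast
  define E where "E = down ((\<lambda>a. a * sinv a) ` A)"
  have idem_E: "idem e" if "e \<in> E" for e
    using that idem_nat_le_idem idem_mult_sinv unfolding E_def down_def by blast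
  have "E \<in> DS TYPE('a)"
    unfolding DS_iff E_def using A(2) compatible_idem idem_mult_sinv by blast
  moreover have "set_mult E E = E"
  proof
    show "set_mult E E \<subseteq> E"
    proof
      fix z assume "z \<in> set_mult E E"
      then obtain e f where "e \<in> E" "f \<in> E" "z = f * e" unfolding set_mult_def by blast
      then have "nat_le z e" using idem_E idem_mult_nat_le by blast
      then show "z \<in> E" using down_closed \<open>e \<in> E\<close> unfolding E_def by blast
    qed
    show "E \<subseteq> set_mult E E"
    proof
      fix e assume "e \<in> E"
      then have "e = e * e" using idem_E unfolding idem_def by simp
      with \<open>e \<in> E\<close> show "e \<in> set_mult E E" unfolding set_mult_def by blast
    qed
  qed
  moreover have "X = set_mult E Y"
  proof
    show "X \<subseteq> set_mult E Y"
    proof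
      fix x assume x: "x \<in> X"
      then obtain a where "a \<in> A" "nat_le x a" using A(1) unfolding down_def by blast
      then have "x * sinv x \<in> E" unfolding E_def down_def using nat_le_mult_sinv by blast
      moreover have "x = x * sinv x * x" by (simp add: mult_sinv_mult)
      ultimately show "x \<in> set_mult E Y"
        using x \<open>X \<subseteq> Y\<close> unfolding set_mult_def by blast
    qed
    show "set_mult E Y \<subseteq> X"
    proof
      fix z assume "z \<in> set_mult E Y"
      then obtain e y where ey: "e \<in> E" "y \<in> Y" "z = e * y" unfolding set_mult_def by blast
      then obtain a where a: "a \<in> A" "nat_le e (a * sinv a)" unfolding E_def down_def by blast
      have "a \<in> Y" using a(1) A(1) subset_down \<open>X \<subseteq> Y\<close> by blast
      then have "compatible a y" using DS_compatible[OF Y _ ey(2)] by simp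
      then have "nat_le z a"
        using mult_nat_le_if_compatible[OF a(2)] ey(3) by simp
      then show "z \<in> X" using A(1) a(1) unfolding down_def by blast
    qed
  qed
  ultimately show ?thesis unfolding nat_le_on_def by blast
qed

lemma DS_nat_le_iff:
  "X \<in> DS TYPE('a) \<Longrightarrow> Y \<in> DS TYPE('a) \<Longrightarrow> nat_le_on (DS TYPE('a)) set_mult X Y \<longleftrightarrow> X \<subseteq> Y"
  using DS_nat_le_imp_subset DS_subset_imp_nat_le by blast

lemma wedge_semigroup_on_DS_iff:
  "wedge_semigroup_on (DS TYPE('a)) set_mult \<longleftrightarrow>
     (\<forall>X\<in>DS TYPE('a). \<forall>Y\<in>DS TYPE('a). \<exists>Z. is_subset_meet (DS TYPE('a)) X Y Z)"
proof -
  have "(\<exists>Z\<in>DS TYPE('a). nat_le_on (DS TYPE('a)) set_mult Z X \<and> nat_le_on (DS TYPE('a)) set_mult Z Y \<and>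
          (\<forall>W\<in>DS TYPE('a). nat_le_on (DS TYPE('a)) set_mult W X \<and> nat_le_on (DS TYPE('a)) set_mult W Y
             \<longrightarrow> nat_le_on (DS TYPE('a)) set_mult W Z))
        \<longleftrightarrow> (\<exists>Z. is_subset_meet (DS TYPE('a)) X Y Z)"
    if "X \<in> DS TYPE('a)" "Y \<in> DS TYPE('a)" for X Y
    using that unfolding is_subset_meet_def by (auto simp: DS_nat_le_iff)
  then show ?thesis unfolding wedge_semigroup_on_def by simp
qed

subsection \<open>Meets in \<open>\<D>(S)\<close>\<close>

lemma down_UN: "down (\<Union>i\<in>I. A i) = (\<Union>i\<in>I. down (A i :: 'a set))"
  unfolding down_def by blast

lemma down_eq_UN_singleton: "down A = (\<Union>a\<in>A. down {a::'a})"
  unfolding down_def by blast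

lemma down_Int_down_finite:
  assumes "weak_semilattice TYPE('a)" and "finite A" and "finite (B::'a set)"
  shows "\<exists>G. finite G \<and> down A \<inter> down B = down G"
proof -
  define F where "F a b = (SOME F. finite F \<and> down {a} \<inter> down {b} = down F)" for a b :: 'a
  have "finite (F a b) \<and> down {a} \<inter> down {b} = down (F a b)" for a b
    unfolding F_def
    by (rule someI_ex) (use assms(1) in \<open>simp add: weak_semilattice_def\<close>)
  then have F: "finite (F a b)" "down {a} \<inter> down {b} = down (F a b)" for a b
    by simp_all
  have "down A \<inter> down B = (\<Union>a\<in>A. \<Union>b\<in>B. down {a} \<inter> down {b})"
    by (subst (1 2) down_eq_UN_singleton) blast
  also have "\<dots> = down (\<Union>a\<in>A. \<Union>b\<in>B. F a b)"
    by (simp only: F(2) down_UN)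
  finally have "down A \<inter> down B = down (\<Union>a\<in>A. \<Union>b\<in>B. F a b)" .
  moreover have "finite (\<Union>a\<in>A. \<Union>b\<in>B. F a b)"
    using assms(2,3) F(1) by simp
  ultimately show ?thesis by blast
qed

lemma DS_Int_closed:
  assumes "weak_semilattice TYPE('a)" and X: "X \<in> DS TYPE('a)" and Y: "Y \<in> DS TYPE('a)"
  shows "X \<inter> Y \<in> DS TYPE('a)"
proof -
  obtain A :: "'a set" where "X = down A" "finite A" using X unfolding DS_iff by blast
  moreover obtain B :: "'a set" where "Y = down B" "finite B" using Y unfolding DS_iff by blast
  ultimately obtain G where G: "finite G" "X \<inter> Y = down G"
    using down_Int_down_finite[OF assms(1)] by metis
  have "\<forall>a\<in>G. \<forall>b\<in>G. compatible a b"
    using G(2) subset_down DS_compatible[OF X] by blast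
  with G show ?thesis unfolding DS_iff by blast
qed

lemma DS_meet_of_principal:
  assumes "is_subset_meet (DS TYPE('a)) (down {a::'a}) (down {b}) Z"
  shows "Z = down {a} \<inter> down {b}"
proof
  have "Z \<subseteq> down {a}" "Z \<subseteq> down {b}"
    and greatest: "\<And>W. W \<in> DS TYPE('a) \<Longrightarrow> W \<subseteq> down {a} \<Longrightarrow> W \<subseteq> down {b} \<Longrightarrow> W \<subseteq> Z"
    using assms unfolding is_subset_meet_def by auto
  then show "Z \<subseteq> down {a} \<inter> down {b}" by blast
  show "down {a} \<inter> down {b} \<subseteq> Z"
  proof
    fix s assume "s \<in> down {a} \<inter> down {b}"
    then have "down {s} \<subseteq> Z"
      using greatest[OF down_singleton_in_DS] by (simp add: down_singleton_subset_iff)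
    then show "s \<in> Z" using subset_down by blast
  qed
qed

end


theorem lemma1p16:
  assumes "inverse_semigroup TYPE('a::semigroup_mult)"
  shows "weak_semilattice TYPE('a) \<longleftrightarrow> wedge_semigroup_on (DS TYPE('a)) set_mult"
proof -
  interpret inv_semigroup using assms by unfold_locales
  show ?thesis
    unfolding wedge_semigroup_on_DS_iff
  proof (intro iffI ballI)
    fix X Y assume "weak_semilattice TYPE('a)" "X \<in> DS TYPE('a)" "Y \<in> DS TYPE('a)"
    then have "X \<inter> Y \<in> DS TYPE('a)" by (rule DS_Int_closed)
    then show "\<exists>Z. is_subset_meet (DS TYPE('a)) X Y Z" by (blast intro: is_subset_meet_Int)
  next
    assume meets: "\<forall>X\<in>DS TYPE('a). \<forall>Y\<in>DS TYPE('a). \<exists>Z. is_subset_meet (DS TYPE('a)) X Y Z"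
    have "down {a} \<inter> down {b} \<in> DS TYPE('a)" for a b :: 'a
    proof -
      obtain Z where Z: "is_subset_meet (DS TYPE('a)) (down {a}) (down {b}) Z"
        using meets down_singleton_in_DS by meson
      then have "Z \<in> DS TYPE('a)" unfolding is_subset_meet_def by blast
      then show ?thesis using DS_meet_of_principal[OF Z] by simp
    qed
    then show "weak_semilattice TYPE('a)"
      unfolding weak_semilattice_def DS_iff by metis
  qed
qed

end
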